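(* Let $n\ge1$, let $A_0,A_1\subseteq 2^{<\omega}$, let $C$ be $n$-fair for $A_0,A_1$, and let $B_0\cup B_1=\omega$ be a partition. Assume there is no infinite set $H$ with ($H\subseteq B_0$ or $H\subseteq B_1$) such that $H\oplus C$ is $n$-fair for $A_0,A_1$. Then for every condition $(F,X)$, every $i<2$, and every $p\in\omega$, there is an extension $(E,Y)$ of $(F,X)$ such that $E\cap B_i\cap(p,+\infty)\neq\emptyset$.
   Context: Conditions. A condition is a Mathias condition $(F,X)$ ($F$ finite, $X$ infinite, $\max F<\min X$) such that $X\oplus C$ is $n$-fair for $A_0,A_1$. A condition $(E,Y)$ extends $(F,X)$ if $F\subseteq E$, $Y\subseteq X$, and $E\setminus F\subseteq X$. Strings are finite binary strings, and $\preceq$ is the prefix relation. Two strings are incomparable if neither is a prefix of the other. Matrices. An $m$-by-$n$ matrix $M$ is an array of strings $\sigma_{i,j}$ ($i<m$, $j<n$), with rows $M(i)=(\sigma_{i,0},\dots,\sigma_{i,n-1})$. It is disjoint if each row consists of pairwise incomparable strings. Formulas. An $m$-by-$n$ formula is a formula with distinguished finite-set variables $U_{i,j}$. It is $\Sigma^{0,X}_1$ if it is $\Sigma^0_1$ relative to $X$. Valuations. An $M$-valuation is a tuple $V=(B_{i,j})$ of finite sets $B_{i,j}\subseteq\{\tau:\tau\succeq\sigma_{i,j}\}$. We write $\varphi(V)$ for $\varphi$ evaluated at $U_{i,j}:=B_{i,j}$, and $V(i)=(B_{i,0},\dots,B_{i,n-1})$. We write $V>s$ if all strings occurring in $V$ have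 length $>s$. Essential. $\varphi$ is essential in $M$ if for every $s$ there is an $M$-valuation $V>s$ with $\varphi(V)$. Diagonalization. An $M$-valuation $V$ diagonalizes against $A_0,A_1$ if for every $i<m$ there are components $L,R$ of $V(i)$ with $L\subseteq A_0$ and $R\subseteq A_1$. Fairness. For $n\ge1$, a set $X$ is $n$-fair for $A_0,A_1$ if the following holds: for every $m$, every $\Sigma^{0,X}_1$ $m$-by-$2^nm$ formula $\varphi$, and every $m$-by-$2^nm$ disjoint matrix $M$ in which $\varphi$ is essential, there is an $M$-valuation $V$ diagonalizing against $A_0,A_1$ with $\varphi(V)$. *)

theory Defs
  imports Main "HOL-Library.Nat_Bijection" "HOL-Library.Sublist"
begin

datatype recf =
    Zero
  | Succ
  | Proj nat
  | Orc
  | Comp recf "recf list"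
  | Prim recf recf
  | Mn recf

inductive eval :: "nat set \<Rightarrow> recf \<Rightarrow> nat list \<Rightarrow> nat \<Rightarrow> bool" for X :: "nat set" where
  ev_zero: "eval X Zero args 0"
| ev_succ: "eval X Succ (x # args) (Suc x)"
| ev_proj: "i < length args \<Longrightarrow> eval X (Proj i) args (args ! i)"
| ev_orc: "eval X Orc (x # args) (if x \<in> X then 1 else 0)"
| ev_comp: "list_all2 (\<lambda>g y. eval X g args y) gs ys \<Longrightarrow> eval X f ys r \<Longrightarrow> eval X (Comp f gs) args r"
| ev_prim0: "eval X f args r \<Longrightarrow> eval X (Prim f g) (0 # args) r"
| ev_primS: "eval X (Prim f g) (n # args) r \<Longrightarrow> eval X g (r # n # args) r'
             \<Longrightarrow> eval X (Prim f g) (Suc n # args) r'"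
| ev_mn: "eval X f (y # args) 0 \<Longrightarrow> (\<forall>z<y. \<exists>r. eval X f (z # args) (Suc r))
             \<Longrightarrow> eval X (Mn f) args y"

definition sigma01_in :: "nat set \<Rightarrow> nat set \<Rightarrow> bool" where
  "sigma01_in X P \<longleftrightarrow> (\<exists>f. \<forall>x. x \<in> P \<longleftrightarrow> (\<exists>r. eval X f [x] r))"

type_synonym str = "bool list"

definition incomparable :: "str \<Rightarrow> str \<Rightarrow> bool" where
  "incomparable s t \<longleftrightarrow> \<not> prefix s t \<and> \<not> prefix t s"

definition join :: "nat set \<Rightarrow> nat set \<Rightarrow> nat set" where
  "join X C = {2 * x | x. x \<in> X} \<union> {2 * x + 1 | x. x \<in> C}"

definition disjoint_matrix :: "nat \<Rightarrow> nat \<Rightarrow> (nat \<Rightarrow> nat \<Rightarrow> str) \<Rightarrow> bool" where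
  "disjoint_matrix m k M \<longleftrightarrow>
     (\<forall>i<m. \<forall>j<k. \<forall>j'<k. j \<noteq> j' \<longrightarrow> incomparable (M i j) (M i j'))"

definition is_valuation :: "nat \<Rightarrow> nat \<Rightarrow> (nat \<Rightarrow> nat \<Rightarrow> str) \<Rightarrow> (nat \<Rightarrow> nat \<Rightarrow> str set) \<Rightarrow> bool" where
  "is_valuation m k M V \<longleftrightarrow>
     (\<forall>i<m. \<forall>j<k. finite (V i j) \<and> (\<forall>\<tau>\<in>V i j. prefix (M i j) \<tau>))"

definition val_gt :: "nat \<Rightarrow> nat \<Rightarrow> (nat \<Rightarrow> nat \<Rightarrow> str set) \<Rightarrow> nat \<Rightarrow> bool" where
  "val_gt m k V s \<longleftrightarrow> (\<forall>i<m. \<forall>j<k. \<forall>\<tau>\<in>V i j. length \<tau> > s)"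

text \<open>A formula with distinguished finite-set variables U_ij is identified with the set of
  codes of the valuations satisfying it; it is Sigma^{0,X}_1 iff that set is X-c.e.\<close>

definition str_code :: "str \<Rightarrow> nat" where
  "str_code s = list_encode (map (\<lambda>b. if b then 1 else 0) s)"

definition fset_code :: "str set \<Rightarrow> nat" where
  "fset_code S = set_encode (str_code ` S)"

definition val_code :: "nat \<Rightarrow> nat \<Rightarrow> (nat \<Rightarrow> nat \<Rightarrow> str set) \<Rightarrow> nat" where
  "val_code m k V = list_encode (map (\<lambda>i. list_encode (map (\<lambda>j. fset_code (V i j)) [0..<k])) [0..<m])"

definition holds :: "nat set \<Rightarrow> nat \<Rightarrow> nat \<Rightarrow> (nat \<Rightarrow> nat \<Rightarrow> str set) \<Rightarrow> bool" where
  "holds \<phi> m k V \<longleftrightarrow> val_code m k V \<in> \<phi>"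

definition essential :: "nat set \<Rightarrow> nat \<Rightarrow> nat \<Rightarrow> (nat \<Rightarrow> nat \<Rightarrow> str) \<Rightarrow> bool" where
  "essential \<phi> m k M \<longleftrightarrow>
     (\<forall>s. \<exists>V. is_valuation m k M V \<and> val_gt m k V s \<and> holds \<phi> m k V)"

definition diagonalizes :: "nat \<Rightarrow> nat \<Rightarrow> (nat \<Rightarrow> nat \<Rightarrow> str set) \<Rightarrow> str set \<Rightarrow> str set \<Rightarrow> bool" where
  "diagonalizes m k V A0 A1 \<longleftrightarrow>
     (\<forall>i<m. \<exists>l<k. \<exists>r<k. V i l \<subseteq> A0 \<and> V i r \<subseteq> A1)"

definition fair :: "nat \<Rightarrow> str set \<Rightarrow> str set \<Rightarrow> nat set \<Rightarrow> bool" where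
  "fair n A0 A1 X \<longleftrightarrow>
     (\<forall>m \<phi> M. sigma01_in X \<phi> \<longrightarrow> disjoint_matrix m (2^n * m) M \<longrightarrow> essential \<phi> m (2^n * m) M \<longrightarrow>
        (\<exists>V. is_valuation m (2^n * m) M V \<and> diagonalizes m (2^n * m) V A0 A1 \<and> holds \<phi> m (2^n * m) V))"

definition is_condition :: "nat \<Rightarrow> str set \<Rightarrow> str set \<Rightarrow> nat set \<Rightarrow> nat set \<Rightarrow> nat set \<Rightarrow> bool" where
  "is_condition n A0 A1 C F X \<longleftrightarrow>
     finite F \<and> infinite X \<and> (\<forall>f\<in>F. \<forall>x\<in>X. f < x) \<and> fair n A0 A1 (join X C)"

definition extends :: "nat set \<Rightarrow> nat set \<Rightarrow> nat set \<Rightarrow> nat set \<Rightarrow> bool" where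
  "extends E Y F X \<longleftrightarrow> F \<subseteq> E \<and> Y \<subseteq> X \<and> E - F \<subseteq> X"

end

theory Submission
  imports Defs
begin

text \<open>The extension exists as soon as \<open>X \<inter> B i\<close> is infinite: add one of its elements
  beyond \<open>p\<close> to \<open>F\<close> and shrink \<open>X\<close> to its elements above it. If \<open>X \<inter> B i\<close> were finite,
  a tail of \<open>X\<close> would be an infinite subset of \<open>B (1 - i)\<close>, and removing finitely many
  elements from \<open>X\<close> preserves fairness of \<open>X \<oplus> C\<close>: an oracle that differs from another
  one in finitely many places can be simulated by it, so both have the same
  \<open>\<Sigma>\<^sup>0\<^sub>1\<close> sets. This contradicts the absence of fair homogeneous sets.\<close>

lemma eval_Zero_iff [simp]: "eval X Zero args r \<longleftrightarrow> r = 0"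
  by (subst eval.simps) auto

lemma eval_Succ_iff [simp]: "eval X Succ args r \<longleftrightarrow> (\<exists>x a. args = x # a \<and> r = Suc x)"
  by (subst eval.simps) auto

lemma eval_Proj_iff [simp]: "eval X (Proj i) args r \<longleftrightarrow> i < length args \<and> r = args ! i"
  by (subst eval.simps) auto

lemma eval_Orc_iff [simp]:
  "eval X Orc args r \<longleftrightarrow> (\<exists>x a. args = x # a \<and> r = (if x \<in> X then 1 else 0))"
  by (subst eval.simps) auto

lemma eval_Comp_iff [simp]:
  "eval X (Comp f gs) args r \<longleftrightarrow> (\<exists>ys. list_all2 (\<lambda>g y. eval X g args y) gs ys \<and> eval X f ys r)"
  by (subst eval.simps) auto

lemma eval_Prim_Nil [simp]: "\<not> eval X (Prim f g) [] r"
  by (subst eval.simps) auto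

lemma eval_Prim_0_iff [simp]: "eval X (Prim f g) (0 # args) r \<longleftrightarrow> eval X f args r"
  by (subst eval.simps) auto

lemma eval_Prim_Suc_iff [simp]:
  "eval X (Prim f g) (Suc n # args) r' \<longleftrightarrow>
     (\<exists>r. eval X (Prim f g) (n # args) r \<and> eval X g (r # n # args) r')"
  by (subst eval.simps) auto

lemma eval_Mn_iff [simp]:
  "eval X (Mn f) args y \<longleftrightarrow> eval X f (y # args) 0 \<and> (\<forall>z<y. \<exists>r. eval X f (z # args) (Suc r))"
  by (subst eval.simps) auto

fun eq_const :: "nat \<Rightarrow> recf" where
  "eq_const 0 = Prim (Comp Succ [Zero]) Zero"
| "eq_const (Suc c) = Prim Zero (Comp (eq_const c) [Proj 1])"

lemma eval_eq_const_iff: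
  "eval X (eq_const c) (q # rest) r \<longleftrightarrow> r = (if q = c then 1 else 0)"
proof (induction c arbitrary: q rest r)
  case 0
  show ?case by (induction q arbitrary: r) (auto simp: list_all2_Cons1)
next
  case (Suc c)
  note IH_c = Suc.IH
  show ?case
  proof (induction q arbitrary: r)
    case (Suc q)
    have "eval X (Comp (eq_const c) [Proj 1]) (r' # q # rest) r \<longleftrightarrow> r = (if q = c then 1 else 0)" for r'
      using IH_c[of q "[]" r] by (auto simp: list_all2_Cons1)
    with Suc.IH show ?case by auto
  qed simp
qed

lemma eval_eq_const_Nil: "\<not> eval X (eq_const c) [] r"
  by (cases c) auto

text \<open>On arguments \<open>[e, o]\<close>, \<open>Prim (Proj 0) Zero\<close> returns \<open>o\<close> if \<open>e = 0\<close> and \<open>0\<close> otherwise.\<close>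

definition oracle_minus :: "nat \<Rightarrow> recf" where
  "oracle_minus c = Comp (Prim (Proj 0) Zero) [eq_const c, Orc]"

lemma eval_oracle_minus_iff:
  "eval X (oracle_minus c) args r \<longleftrightarrow> eval (X - {c}) Orc args r"
proof (cases args)
  case Nil
  then show ?thesis by (auto simp: oracle_minus_def list_all2_Cons1 eval_eq_const_Nil)
next
  case (Cons q rest)
  let ?e = "if q = c then 1 else (0::nat)" and ?o = "if q \<in> X then 1 else (0::nat)"
  have "eval X (oracle_minus c) args r \<longleftrightarrow> eval X (Prim (Proj 0) Zero) [?e, ?o] r"
    using Cons by (auto simp: oracle_minus_def list_all2_Cons1 eval_eq_const_iff)
  also have "\<dots> \<longleftrightarrow> r = (if q \<in> X - {c} then 1 else 0)"
    by (cases "q = c") auto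
  finally show ?thesis using Cons by simp
qed

fun subst_oracle :: "recf \<Rightarrow> recf \<Rightarrow> recf" where
  "subst_oracle Q Orc = Q"
| "subst_oracle Q Zero = Zero"
| "subst_oracle Q Succ = Succ"
| "subst_oracle Q (Proj i) = Proj i"
| "subst_oracle Q (Comp f gs) = Comp (subst_oracle Q f) (map (subst_oracle Q) gs)"
| "subst_oracle Q (Prim f g) = Prim (subst_oracle Q f) (subst_oracle Q g)"
| "subst_oracle Q (Mn f) = Mn (subst_oracle Q f)"

lemma eval_subst_oracle_iff:
  assumes "\<And>args r. eval X Q args r \<longleftrightarrow> eval Y Orc args r"
  shows "eval X (subst_oracle Q f) args r \<longleftrightarrow> eval Y f args r"
proof (induction f arbitrary: args r)
  case (Comp f gs)
  have "list_all2 (\<lambda>g y. eval X g args y) (map (subst_oracle Q) gs) ys \<longleftrightarrow>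
        list_all2 (\<lambda>g y. eval Y g args y) gs ys" for args ys
    using Comp.IH(2) by (auto simp: list_all2_conv_all_nth)
  with Comp.IH(1) show ?case by simp
next
  case (Prim f g)
  have "eval X (subst_oracle Q (Prim f g)) (k # args) r \<longleftrightarrow> eval Y (Prim f g) (k # args) r"
    for k args r
    by (induction k arbitrary: r) (simp_all add: Prim.IH)
  then show ?case by (cases args) auto
qed (simp_all add: assms)

lemma sigma01_in_Diff_finite:
  assumes "finite D" and "sigma01_in (X - D) P"
  shows "sigma01_in X P"
  using assms
proof (induction D arbitrary: P rule: finite_induct)
  case (insert c D)
  from insert.prems have "sigma01_in (X - D - {c}) P"
    by (simp only: Diff_insert[of X c D])
  then obtain f where "\<forall>x. x \<in> P \<longleftrightarrow> (\<exists>r. eval (X - D - {c}) f [x] r)"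
    unfolding sigma01_in_def by blast
  then have "\<forall>x. x \<in> P \<longleftrightarrow> (\<exists>r. eval (X - D) (subst_oracle (oracle_minus c) f) [x] r)"
    using eval_subst_oracle_iff[OF eval_oracle_minus_iff] by simp
  then show ?case using insert.IH unfolding sigma01_in_def by blast
qed simp

lemma fair_Diff_finite:
  "finite D \<Longrightarrow> fair n A0 A1 X \<Longrightarrow> fair n A0 A1 (X - D)"
  unfolding fair_def using sigma01_in_Diff_finite by blast

lemma join_Int_greaterThan:
  "join (X \<inter> {d<..}) C = join X C - {2 * y | y. y \<le> d}"
  unfolding join_def by auto presburger+

lemma fair_join_Int_greaterThan:
  "fair n A0 A1 (join X C) \<Longrightarrow> fair n A0 A1 (join (X \<inter> {d<..}) C)"
  unfolding join_Int_greaterThan by (rule fair_Diff_finite) auto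

lemma infinite_Int_greaterThan:
  fixes X :: "nat set"
  assumes "infinite X"
  shows "infinite (X \<inter> {d<..})"
proof -
  have "X \<inter> {d<..} = X - {..d}" by auto
  with assms show ?thesis by (simp add: Diff_infinite_finite)
qed

lemma is_condition_extends_insert:
  assumes "is_condition n A0 A1 C F X" and "x \<in> X"
  shows "is_condition n A0 A1 C (insert x F) (X \<inter> {x<..})"
    and "extends (insert x F) (X \<inter> {x<..}) F X"
  using assms
  by (auto simp: is_condition_def extends_def infinite_Int_greaterThan fair_join_Int_greaterThan)

lemma infinite_Int_part_if_no_fair_homogeneous:
  assumes "infinite X" and "fair n A0 A1 (join X C)"
    and "B 0 \<union> B 1 = UNIV" and "i < (2::nat)"
    and "\<not> (\<exists>H. infinite H \<and> (H \<subseteq> B 0 \<or> H \<subseteq> B 1) \<and> fair n A0 A1 (join H C))"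
  shows "infinite (X \<inter> B i)"
proof
  assume "finite (X \<inter> B i)"
  then obtain d where d: "\<forall>y\<in>X \<inter> B i. y \<le> d"
    using finite_nat_set_iff_bounded_le by blast
  let ?H = "X \<inter> {d<..}"
  have "?H \<inter> B i = {}"
    using d by (fastforce simp: not_less[symmetric])
  moreover have "i = 0 \<or> i = 1"
    using assms(4) by linarith
  ultimately have "?H \<subseteq> B 0 \<or> ?H \<subseteq> B 1"
    using assms(3) by blast
  moreover have "infinite ?H" and "fair n A0 A1 (join ?H C)"
    using assms(1,2) by (simp_all add: infinite_Int_greaterThan fair_join_Int_greaterThan)
  ultimately show False
    using assms(5) by blast
qed

theorem mainTheorem12:
  fixes n :: nat and A0 A1 :: "bool list set" and C :: "nat set" and B :: "nat \<Rightarrow> nat set"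
  assumes "n \<ge> 1"
    and "fair n A0 A1 C"
    and "B 0 \<union> B 1 = UNIV" and "B 0 \<inter> B 1 = {}"
    and "\<not> (\<exists>H. infinite H \<and> (H \<subseteq> B 0 \<or> H \<subseteq> B 1) \<and> fair n A0 A1 (join H C))"
  shows "\<forall>F X. is_condition n A0 A1 C F X \<longrightarrow> (\<forall>i<2. \<forall>p.
           \<exists>E Y. is_condition n A0 A1 C E Y \<and> extends E Y F X \<and> E \<inter> B i \<inter> {p<..} \<noteq> {})"
proof (intro allI impI)
  fix F X i p
  assume cond: "is_condition n A0 A1 C F X" and i: "i < (2::nat)"
  then have "infinite X" and "fair n A0 A1 (join X C)"
    by (simp_all add: is_condition_def)
  then have "infinite (X \<inter> B i)"
    using infinite_Int_part_if_no_fair_homogeneous assms(3,5) i by blast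
  then obtain x where x: "x \<in> X \<inter> B i" "p < x"
    using finite_nat_set_iff_bounded_le not_le by metis
  then have "x \<in> insert x F \<inter> B i \<inter> {p<..}" by auto
  with is_condition_extends_insert[OF cond] x(1)
  show "\<exists>E Y. is_condition n A0 A1 C E Y \<and> extends E Y F X \<and> E \<inter> B i \<inter> {p<..} \<noteq> {}"
    by blast
qed

end
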